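(* Let $\gamma\in(0,1)$, $\xi\in(\gamma,1)$, $\lambda_h=\left(\sqrt{(1-\gamma)\xi}-\sqrt{(1-\xi)\gamma}\right)^2$, $\Lambda_h=\left(\sqrt{(1-\gamma)\xi}+\sqrt{(1-\xi)\gamma}\right)^2$, and define $\tau=\left(\frac{\sqrt{\Lambda_h}-\sqrt{\lambda_h}}{\sqrt{\Lambda_h}+\sqrt{\lambda_h}}\right)^2$, $c=\frac{4}{(\sqrt{1/\Lambda_h}+\sqrt{1/\lambda_h})^2}$, $\alpha=(1-\sqrt\tau)^2$, $\beta=(1+\sqrt\tau)^2$, $\omega=\frac{4}{(\sqrt{\beta-c}+\sqrt{\alpha-c})^2}$, $\kappa=\left(\frac{\sqrt{\beta-c}-\sqrt{\alpha-c}}{\sqrt{\beta-c}+\sqrt{\alpha-c}}\right)^2$. Let $\Pi_0(x)=1$, $\Pi_1(x)=1-x$, and $\Pi_t(x)=(1+\kappa-x)\Pi_{t-1}(x)-\kappa\Pi_{t-2}(x)$ for $t\ge2$ (the orthogonal family for $\mu_\kappa$). Define $R_t(x)=\Pi_t(\omega(x-c))/\Pi_t(-\omega c)$. Then $R_t(0)=1$, $\deg(R_t)=t$, and the family $\{R_t\}$ is orthogonal with respect to the density $\frac{x\,\mu_\tau(x)}{x-c}$ on $[\alpha,\beta]$.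
   Context: For $r\in(0,1)$, $\mu_r(x)=\frac{\sqrt{((1+\sqrt r)^2-x)_+(x-(1-\sqrt r)^2)_+}}{2\pi r x}$ is the Marchenko–Pastur density with parameter $r$; in particular $\mu_\tau$ is supported on $[\alpha,\beta]$. $y_+=\max\{y,0\}$. *)

theory Defs
  imports "HOL-Analysis.Analysis" "HOL-Computational_Algebra.Polynomial"
begin

definition mp_density :: "real \<Rightarrow> real \<Rightarrow> real" where
  "mp_density r x =
     sqrt (max ((1 + sqrt r)^2 - x) 0 * max (x - (1 - sqrt r)^2) 0) / (2 * pi * r * x)"

fun Pi_poly :: "real \<Rightarrow> nat \<Rightarrow> real poly" where
  "Pi_poly k 0 = 1"
| "Pi_poly k (Suc 0) = [:1, -1:]"
| "Pi_poly k (Suc (Suc t)) = [:1 + k, -1:] * Pi_poly k (Suc t) - smult k (Pi_poly k t)"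

definition R_poly :: "real \<Rightarrow> real \<Rightarrow> real \<Rightarrow> nat \<Rightarrow> real poly" where
  "R_poly k w c t =
     smult (1 / poly (Pi_poly k t) (- w * c)) (pcompose (Pi_poly k t) [:- w * c, w:])"

end

theory Submission
  imports Defs
begin

text \<open>
  The substitution y = \<omega> (x - c) maps [\<alpha>, \<beta>] onto the support [(1 - q)^2, (1 + q)^2] of
  \<mu>_\<kappa>, where q = sqrt \<kappa>, and turns the weight x \<mu>_\<tau>(x) / (x - c) into a constant multiple
  of \<mu>_\<kappa>(y); so it suffices that the \<Pi>_t are orthogonal for \<mu>_\<kappa>. With
  y = 1 + q^2 - 2 q cos \<theta> the recurrence is solved by
  sin \<theta> \<Pi>_t(y) = Im (q^t e^{it\<theta>} (e^{i\<theta>} - q)), and \<Pi>_s \<Pi>_t d\<mu>_\<kappa> becomes, up to a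
  constant, (cos ((s - t) \<theta>) - Re (e^{i(s+t+1)\<theta>} B(e^{i\<theta>}))) d\<theta> on [0, \<pi>], with the
  Blaschke factor B(w) = (w - q) / (1 - q w). Both terms integrate to zero: the integrals J_m of
  Re (e^{im\<theta>} B(e^{i\<theta>})) satisfy J_m = q J_{m+1} and are bounded, so they vanish for q < 1.
  The normalisation R_t(0) = 1 makes sense because \<Pi>_t(z) \<ge> 1 for z \<le> 0.
\<close>

lemma poly_Pi_poly_Suc_Suc:
  "poly (Pi_poly k (Suc (Suc t))) x
     = (1 + k - x) * poly (Pi_poly k (Suc t)) x - k * poly (Pi_poly k t) x"
  by (simp add: algebra_simps)

lemma poly_Pi_poly_nonpos_ge_1_mono:
  assumes "0 \<le> k" "z \<le> 0"
  shows "1 \<le> poly (Pi_poly k t) z \<and> poly (Pi_poly k t) z \<le> poly (Pi_poly k (Suc t)) z"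
proof (induction t)
  case 0
  then show ?case using assms by simp
next
  case (Suc t)
  define a where "a = poly (Pi_poly k t) z"
  define b where "b = poly (Pi_poly k (Suc t)) z"
  have ab: "1 \<le> a" "a \<le> b"
    using Suc by (auto simp: a_def b_def)
  have "poly (Pi_poly k (Suc (Suc t))) z - b = k * (b - a) + (- z) * b"
    unfolding a_def b_def poly_Pi_poly_Suc_Suc by (simp add: algebra_simps)
  moreover have "0 \<le> k * (b - a)" "0 \<le> (- z) * b"
    using ab assms by (simp, intro mult_nonneg_nonneg) auto
  ultimately show ?case
    using ab by (simp add: b_def)
qed

lemma degree_Pi_poly: "degree (Pi_poly k t) = t \<and> coeff (Pi_poly k t) t = (-1)^t"
proof (induction k t rule: Pi_poly.induct)
  case (1 k)
  then show ?case by simp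
next
  case (2 k)
  then show ?case by simp
next
  case (3 k t)
  let ?A = "Pi_poly k (Suc t)" and ?B = "Pi_poly k t"
  have eq: "Pi_poly k (Suc (Suc t)) = (smult (1 + k) ?A - smult k ?B) - pCons 0 ?A"
    by (simp add: mult_pCons_left algebra_simps)
  have lower: "degree (smult (1 + k) ?A - smult k ?B) \<le> Suc t"
    using 3 by (intro degree_diff_le) (auto intro: order.trans[OF degree_smult_le])
  have "?A \<noteq> 0"
    using 3 by (metis coeff_0 zero_neq_neg_one power_eq_0_iff neg_equal_0_iff_equal)
  then have top: "degree (pCons 0 ?A) = Suc (Suc t)"
    using 3 by simp
  have "degree (Pi_poly k (Suc (Suc t))) = Suc (Suc t)"
    unfolding eq diff_conv_add_uminus using lower top by (subst degree_add_eq_right) auto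
  moreover have "coeff (Pi_poly k (Suc (Suc t))) (Suc (Suc t)) = - coeff ?A (Suc t)"
    unfolding eq using 3 coeff_eq_0[of ?B "Suc (Suc t)"] coeff_eq_0[of ?A "Suc (Suc t)"] by simp
  ultimately show ?case
    using 3 by simp
qed

lemma poly_R_poly:
  "poly (R_poly k w c t) x = poly (Pi_poly k t) (w * (x - c)) / poly (Pi_poly k t) (- w * c)"
  unfolding R_poly_def by (simp add: poly_pcompose algebra_simps)

lemma R_poly_normalized:
  assumes "0 \<le> k" "0 < w" "0 \<le> c"
  shows "poly (R_poly k w c t) 0 = 1" "degree (R_poly k w c t) = t"
proof -
  have norm: "1 \<le> poly (Pi_poly k t) (- w * c)"
    using poly_Pi_poly_nonpos_ge_1_mono[of k "- w * c" t] assms by simp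
  show "poly (R_poly k w c t) 0 = 1"
    unfolding poly_R_poly using norm by simp
  show "degree (R_poly k w c t) = t"
    unfolding R_poly_def using norm assms(2) degree_Pi_poly[of k t] by (simp add: degree_pcompose)
qed

lemma cis_power2: "cis \<theta> ^ 2 = 2 * complex_of_real (cos \<theta>) * cis \<theta> - 1"
  by (simp add: complex_eq_iff power2_eq_square cos_diff[symmetric] sin_add[symmetric]
      cos_add cos_squared_eq algebra_simps)

lemma sin_mult_poly_Pi_poly_cos:
  "sin \<theta> * poly (Pi_poly (q^2) t) (1 + q^2 - 2*q*cos \<theta>)
     = Im (complex_of_real (q^t) * cis \<theta> ^ t * (cis \<theta> - complex_of_real q))"
proof (induction "q^2" t rule: Pi_poly.induct)
  case 1
  then show ?case by simp
next
  case 2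
  then show ?case by (simp add: power2_eq_square sin_add[symmetric] algebra_simps)
next
  case (3 t)
  let ?E = "\<lambda>n. complex_of_real (q^n) * cis \<theta> ^ n * (cis \<theta> - complex_of_real q)"
  let ?Y = "1 + q^2 - 2*q*cos \<theta>"
  have "?E (Suc (Suc t))
      = complex_of_real (q^t*q^2) * cis \<theta> ^ t * cis \<theta> ^ 2 * (cis \<theta> - complex_of_real q)"
    by (simp add: power2_eq_square algebra_simps)
  also have "\<dots> = complex_of_real (2*q*cos \<theta>) * ?E (Suc t) - complex_of_real (q^2) * ?E t"
    unfolding cis_power2 by (simp add: power2_eq_square algebra_simps)
  finally have "Im (?E (Suc (Suc t))) = 2*q*cos \<theta> * Im (?E (Suc t)) - q^2 * Im (?E t)"
    by simp
  moreover have "sin \<theta> * poly (Pi_poly (q^2) (Suc (Suc t))) ?Y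
      = 2*q*cos \<theta> * (sin \<theta> * poly (Pi_poly (q^2) (Suc t)) ?Y)
        - q^2 * (sin \<theta> * poly (Pi_poly (q^2) t) ?Y)"
    by (simp only: poly_Pi_poly_Suc_Suc) (simp add: algebra_simps)
  ultimately show ?case
    using 3 by simp
qed

lemma cis_minus_mult_cnj:
  "(cis \<theta> - complex_of_real q) * cnj (cis \<theta> - complex_of_real q)
     = complex_of_real (1 + q^2 - 2*q*cos \<theta>)"
  by (simp add: complex_eq_iff power2_eq_square algebra_simps sin_squared_eq)

lemma cis_minus_mult_one_minus:
  "(cis \<theta> - complex_of_real q) * (1 - complex_of_real q * cis \<theta>)
     = complex_of_real (1 + q^2 - 2*q*cos \<theta>) * cis \<theta>"
  by (simp add: complex_eq_iff power2_eq_square algebra_simps sin_squared_eq)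
     (metis distrib_left mult.right_neutral sin_cos_squared_add3)

text \<open>At \<open>q = 1\<close> the quotient is \<open>-1\<close> except at \<open>w = 1\<close>, where it is \<open>0/0\<close>;
  the constant keeps \<open>\<theta> \<mapsto> blaschke q (cis \<theta>)\<close> continuous.\<close>
definition blaschke :: "real \<Rightarrow> complex \<Rightarrow> complex" where
  "blaschke q w = (if q = 1 then -1 else (w - complex_of_real q) / (1 - complex_of_real q * w))"

lemma one_minus_mult_cis_nonzero:
  assumes "0 \<le> q" "q < 1"
  shows "1 - complex_of_real q * cis \<theta> \<noteq> 0"
proof -
  have "norm (complex_of_real q * cis \<theta>) = q"
    using assms by (simp add: norm_mult)
  then show ?thesis
    using assms by auto
qed

lemma blaschke_cis_mult:
  assumes "0 \<le> q" "q \<le> 1"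
  shows "blaschke q (cis \<theta>) * (1 - complex_of_real q * cis \<theta>) = cis \<theta> - complex_of_real q"
  using one_minus_mult_cis_nonzero[of q \<theta>] assms
  by (cases "q = 1") (auto simp: blaschke_def)

lemma norm_blaschke_cis:
  assumes "0 \<le> q" "q \<le> 1"
  shows "norm (blaschke q (cis \<theta>)) = 1"
proof (cases "q = 1")
  case True
  then show ?thesis by (simp add: blaschke_def)
next
  case False
  have "norm (cis \<theta> - complex_of_real q) = norm (1 - complex_of_real q * cis \<theta>)"
    unfolding cmod_def by (simp add: power2_eq_square algebra_simps)
      (metis distrib_left mult.right_neutral sin_cos_squared_add3)
  moreover have "norm (blaschke q (cis \<theta>)) * norm (1 - complex_of_real q * cis \<theta>)
      = norm (cis \<theta> - complex_of_real q)"
    unfolding blaschke_cis_mult[OF assms, symmetric] by (rule norm_mult[symmetric])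
  moreover have "norm (1 - complex_of_real q * cis \<theta>) \<noteq> 0"
    using one_minus_mult_cis_nonzero[of q \<theta>] assms False by simp
  ultimately show ?thesis
    by simp
qed

lemma continuous_on_blaschke_cis:
  assumes "0 \<le> q" "q \<le> 1"
  shows "continuous_on S (\<lambda>\<theta>. blaschke q (cis \<theta>))"
proof (cases "q = 1")
  case True
  then show ?thesis by (simp add: blaschke_def)
next
  case False
  then show ?thesis
    unfolding blaschke_def using one_minus_mult_cis_nonzero[of q] assms
    by (auto intro!: continuous_intros)
qed

lemma cos_mult_has_integral_0:
  assumes "1 \<le> n"
  shows "((\<lambda>\<theta>. cos (real n * \<theta>)) has_integral 0) {0..pi}"
proof -
  have "((\<lambda>\<theta>. cos (real n * \<theta>)) has_integral (sin (real n * pi) / n - sin (real n * 0) / n)) {0..pi}"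
  proof (rule fundamental_theorem_of_calculus)
    fix x assume "x \<in> {0..pi}"
    show "((\<lambda>\<theta>. sin (real n * \<theta>) / n) has_vector_derivative cos (real n * x)) (at x within {0..pi})"
      unfolding has_real_derivative_iff_has_vector_derivative[symmetric]
      using assms by (auto intro!: derivative_eq_intros)
  qed simp
  then show ?thesis by simp
qed

lemma bounded_contracting_sequence_eq_0:
  fixes J :: "nat \<Rightarrow> real"
  assumes "0 \<le> q" "q < 1" "\<And>n. m \<le> n \<Longrightarrow> J n = q * J (Suc n)" "\<And>n. \<bar>J n\<bar> \<le> B"
  shows "J m = 0"
proof -
  have J_shift: "J m = q ^ k * J (m + k)" for k
  proof (induction k)
    case (Suc k)
    then show ?case
      using assms(3)[of "m + k"] by simp
  qed simp
  have "\<bar>J m\<bar> \<le> q ^ k * B" for k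
    unfolding J_shift[of k] using assms(1) mult_left_mono[OF assms(4)[of "m + k"], of "q ^ k"]
    by (simp add: abs_mult)
  moreover have "(\<lambda>k. q ^ k * B) \<longlonglongrightarrow> 0"
    using assms(1,2) by (intro tendsto_mult_left_zero LIMSEQ_power_zero) auto
  ultimately have "\<bar>J m\<bar> \<le> 0"
    by (intro LIMSEQ_le_const[of "\<lambda>k. q ^ k * B"]) auto
  then show ?thesis by simp
qed

lemma Re_cis_power_blaschke_recurrence:
  assumes "0 \<le> q" "q \<le> 1"
  shows "Re (cis \<theta> ^ n * blaschke q (cis \<theta>)) - q * Re (cis \<theta> ^ Suc n * blaschke q (cis \<theta>))
    = cos (real (Suc n) * \<theta>) - q * cos (real n * \<theta>)"
proof -
  have Re_diff_mult: "Re (X - complex_of_real q * Y) = Re X - q * Re Y" for X Y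
    by simp
  have "cis \<theta> ^ n * blaschke q (cis \<theta>) - q * (cis \<theta> ^ Suc n * blaschke q (cis \<theta>))
      = cis \<theta> ^ n * (blaschke q (cis \<theta>) * (1 - q * cis \<theta>))"
    by (simp add: algebra_simps)
  also have "\<dots> = cis \<theta> ^ Suc n - q * cis \<theta> ^ n"
    unfolding blaschke_cis_mult[OF assms] by (simp add: algebra_simps)
  finally have "cis \<theta> ^ n * blaschke q (cis \<theta>) - q * (cis \<theta> ^ Suc n * blaschke q (cis \<theta>))
      = cis \<theta> ^ Suc n - q * cis \<theta> ^ n" .
  then have "Re (cis \<theta> ^ n * blaschke q (cis \<theta>)) - q * Re (cis \<theta> ^ Suc n * blaschke q (cis \<theta>))
      = Re (cis \<theta> ^ Suc n - q * cis \<theta> ^ n)"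
    by (metis Re_diff_mult)
  then show ?thesis
    unfolding Complex.DeMoivre by simp
qed

lemma Re_cis_power_blaschke_has_integral_0:
  assumes "0 \<le> q" "q \<le> 1" "1 \<le> m"
  shows "((\<lambda>\<theta>. Re (cis \<theta> ^ m * blaschke q (cis \<theta>))) has_integral 0) {0..pi}"
proof (cases "q = 1")
  case True
  then show ?thesis
    using has_integral_neg[OF cos_mult_has_integral_0[OF assms(3)]]
    by (simp add: blaschke_def Complex.DeMoivre)
next
  case False
  define f where "f n \<theta> = Re (cis \<theta> ^ n * blaschke q (cis \<theta>))" for n \<theta>
  define J where "J n = integral {0..pi} (f n)" for n
  have f_integral: "(f n has_integral J n) {0..pi}" for n
    unfolding J_def f_def using continuous_on_blaschke_cis[OF assms(1,2)]
    by (intro integrable_integral integrable_continuous_real continuous_intros)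
  have f_recurrence:
    "f n \<theta> - q * f (Suc n) \<theta> = cos (real (Suc n) * \<theta>) - q * cos (real n * \<theta>)" for n \<theta>
    unfolding f_def by (rule Re_cis_power_blaschke_recurrence[OF assms(1,2)])
  have diff_integral_0: "((\<lambda>\<theta>. f n \<theta> - q * f (Suc n) \<theta>) has_integral 0 - q * 0) {0..pi}"
    if "1 \<le> n" for n
    unfolding f_recurrence using that
    by (intro has_integral_diff has_integral_mult_right cos_mult_has_integral_0) auto
  have diff_integral_J: "((\<lambda>\<theta>. f n \<theta> - q * f (Suc n) \<theta>) has_integral J n - q * J (Suc n)) {0..pi}"
    for n
    by (intro has_integral_diff has_integral_mult_right f_integral)
  have "J n = q * J (Suc n)" if "m \<le> n" for n
    using has_integral_unique[OF diff_integral_J diff_integral_0[of n]] that assms(3) by simp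
  moreover have "\<bar>J n\<bar> \<le> pi" for n
  proof -
    have "norm (f n \<theta>) \<le> 1" for \<theta>
      unfolding f_def using abs_Re_le_cmod[of "cis \<theta> ^ n * blaschke q (cis \<theta>)"]
      by (simp add: norm_mult norm_power norm_blaschke_cis[OF assms(1,2)])
    then show ?thesis
      using has_integral_bound_real[of 1 "{}" "f n" "J n" 0 pi] f_integral by simp
  qed
  moreover have "q < 1"
    using assms(2) False by simp
  ultimately have "J m = 0"
    using bounded_contracting_sequence_eq_0[OF assms(1)] by blast
  then show ?thesis
    unfolding f_def[symmetric] using f_integral[of m] by simp
qed

text \<open>Comes from Im a Im b = (Re (a cnj b) - Re (a b)) / 2 applied to the representation of
  sin \<theta> \<Pi>_t(y) in sin_mult_poly_Pi_poly_cos; see Pi_product_kernel_mult.\<close>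
definition Pi_product_kernel :: "real \<Rightarrow> nat \<Rightarrow> nat \<Rightarrow> real \<Rightarrow> real" where
  "Pi_product_kernel q s t \<theta> = q^(s+t) / 2 *
     (cos ((real s - real t) * \<theta>) - Re (cis \<theta> ^ (s+t+1) * blaschke q (cis \<theta>)))"

lemma Pi_product_kernel_mult:
  assumes "0 \<le> q" "q \<le> 1"
  shows "Pi_product_kernel q s t \<theta> * (1 + q^2 - 2*q*cos \<theta>)
    = (sin \<theta>)^2 * poly (Pi_poly (q^2) s) (1 + q^2 - 2*q*cos \<theta>)
        * poly (Pi_poly (q^2) t) (1 + q^2 - 2*q*cos \<theta>)"
proof -
  define w where "w = cis \<theta>"
  define Y where "Y = 1 + q^2 - 2*q*cos \<theta>"
  define a where "a = complex_of_real (q^s) * w ^ s * (w - complex_of_real q)"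
  define b where "b = complex_of_real (q^t) * w ^ t * (w - complex_of_real q)"
  have "(sin \<theta>)^2 * poly (Pi_poly (q^2) s) Y * poly (Pi_poly (q^2) t) Y
      = (sin \<theta> * poly (Pi_poly (q^2) s) Y) * (sin \<theta> * poly (Pi_poly (q^2) t) Y)"
    by (simp add: power2_eq_square)
  also have "\<dots> = Im a * Im b"
    unfolding a_def b_def w_def Y_def sin_mult_poly_Pi_poly_cos ..
  also have "\<dots> = (Re (a * cnj b) - Re (a * b)) / 2"
    by simp
  also have "a * cnj b = complex_of_real (q^(s+t)) * (w^s * cnj w ^ t)
      * ((w - complex_of_real q) * cnj (w - complex_of_real q))"
    unfolding a_def b_def by (simp add: power_add algebra_simps)
  also have "w^s * cnj w ^ t = cis ((real s - real t) * \<theta>)"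
    unfolding w_def cis_cnj by (simp add: Complex.DeMoivre cis_mult algebra_simps)
  also have "(w - complex_of_real q) * cnj (w - complex_of_real q) = complex_of_real Y"
    unfolding w_def Y_def by (rule cis_minus_mult_cnj)
  also have "a * b = complex_of_real (q^(s+t)) * w^(s+t) * (w - complex_of_real q)^2"
    unfolding a_def b_def by (simp add: power_add power2_eq_square algebra_simps)
  also have "(w - complex_of_real q)^2
      = (w - complex_of_real q) * (blaschke q w * (1 - complex_of_real q * w))"
    unfolding w_def blaschke_cis_mult[OF assms] by (simp add: power2_eq_square)
  also have "\<dots> = blaschke q w * ((w - complex_of_real q) * (1 - complex_of_real q * w))"
    by (rule mult.left_commute)
  also have "\<dots> = complex_of_real Y * w * blaschke q w"
    unfolding w_def Y_def cis_minus_mult_one_minus by (rule mult.commute)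
  finally show ?thesis
    unfolding Y_def[symmetric] w_def[symmetric] Pi_product_kernel_def
    by (simp add: power_add algebra_simps)
qed

lemma continuous_on_Pi_product_kernel:
  assumes "0 \<le> q" "q \<le> 1"
  shows "continuous_on S (Pi_product_kernel q s t)"
  unfolding Pi_product_kernel_def using continuous_on_blaschke_cis[OF assms]
  by (auto intro!: continuous_intros)

lemma Pi_product_kernel_has_integral_0:
  assumes "0 \<le> q" "q \<le> 1" "s \<noteq> t"
  shows "(Pi_product_kernel q s t has_integral 0) {0..pi}"
proof -
  define n where "n = (if s < t then t - s else s - t)"
  have "cos ((real s - real t) * \<theta>) = cos (real n * \<theta>)" for \<theta>
  proof -
    have "real s - real t = real n \<or> real s - real t = - real n"
      unfolding n_def by auto
    then show ?thesis
      by auto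
  qed
  moreover have "((\<lambda>\<theta>. cos (real n * \<theta>) - Re (cis \<theta> ^ (s+t+1) * blaschke q (cis \<theta>)))
      has_integral 0 - 0) {0..pi}"
    using assms unfolding n_def
    by (intro has_integral_diff cos_mult_has_integral_0 Re_cis_power_blaschke_has_integral_0) auto
  ultimately show ?thesis
    unfolding Pi_product_kernel_def using has_integral_mult_right[of _ "0 - 0" _ "q^(s+t) / 2"]
    by simp
qed

lemma arccos_affine_has_real_derivative:
  fixes a b y :: real
  assumes "a < y" "y < b"
  shows "((\<lambda>y. arccos ((a + b - 2 * y) / (b - a))) has_real_derivative
           1 / sqrt ((b - y) * (y - a))) (at y)"
proof -
  define u where "u y = (a + b - 2 * y) / (b - a)" for y
  have "b - a \<noteq> 0"
    using assms by simp
  then have sq: "1 - (u y)^2 = (2 / (b - a))^2 * ((b - y) * (y - a))"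
    unfolding u_def by (simp add: power_divide divide_simps) (simp add: power2_eq_square algebra_simps)
  moreover have "0 < (2 / (b - a))^2 * ((b - y) * (y - a))"
    using assms by simp
  ultimately have "(u y)^2 < 1"
    by linarith
  then have u: "-1 < u y" "u y < 1"
    by (simp_all add: abs_square_less_1 abs_less_iff)
  have "((\<lambda>y. a + b - 2 * y) has_real_derivative - 2) (at y)"
    by (auto intro!: derivative_eq_intros)
  from DERIV_cdivide[OF this, of "b - a"]
  have "(u has_real_derivative - 2 / (b - a)) (at y)"
    unfolding u_def .
  from DERIV_chain2[OF DERIV_arccos[OF u] this]
  have "((\<lambda>y. arccos (u y)) has_real_derivative
          inverse (- sqrt (1 - (u y)^2)) * (- 2 / (b - a))) (at y)" .
  moreover have "inverse (- sqrt (1 - (u y)^2)) * (- 2 / (b - a)) = 1 / sqrt ((b - y) * (y - a))"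
  proof -
    have "sqrt (1 - (u y)^2) = 2 / (b - a) * sqrt ((b - y) * (y - a))"
      unfolding sq using assms by (simp add: real_sqrt_mult)
    moreover have "0 < sqrt ((b - y) * (y - a))"
      using assms by simp
    ultimately show ?thesis
      using assms by (simp add: divide_simps)
  qed
  ultimately show ?thesis
    unfolding u_def by simp
qed

lemma arccos_affine_image:
  fixes a b :: real
  assumes "a < b"
  shows "continuous_on {a..b} (\<lambda>y. arccos ((a + b - 2 * y) / (b - a)))"
    and "(\<lambda>y. arccos ((a + b - 2 * y) / (b - a))) ` {a..b} \<subseteq> {0..pi}"
    and "\<And>y. a < y \<Longrightarrow> y < b \<Longrightarrow> arccos ((a + b - 2 * y) / (b - a)) \<in> {0<..<pi}"
    and "arccos ((a + b - 2 * a) / (b - a)) = 0" "arccos ((a + b - 2 * b) / (b - a)) = pi"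
proof -
  have "-1 \<le> (a + b - 2 * y) / (b - a) \<and> (a + b - 2 * y) / (b - a) \<le> 1" if "y \<in> {a..b}" for y
    using that assms by (simp add: pos_le_divide_eq pos_divide_le_eq)
  then show "continuous_on {a..b} (\<lambda>y. arccos ((a + b - 2 * y) / (b - a)))"
    "(\<lambda>y. arccos ((a + b - 2 * y) / (b - a))) ` {a..b} \<subseteq> {0..pi}"
    using assms by (auto intro!: continuous_on_arccos continuous_intros arccos_lbound arccos_ubound)
  show "arccos ((a + b - 2 * y) / (b - a)) \<in> {0<..<pi}" if "a < y" "y < b" for y
  proof -
    have "-1 < (a + b - 2 * y) / (b - a) \<and> (a + b - 2 * y) / (b - a) < 1"
      using that by (simp add: pos_less_divide_eq pos_divide_less_eq)
    then show ?thesis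
      using arccos_lt_bounded by auto
  qed
  have "(a + b - 2 * a) / (b - a) = 1" "(a + b - 2 * b) / (b - a) = -1"
    using assms by (simp_all add: field_simps)
  then show "arccos ((a + b - 2 * a) / (b - a)) = 0" "arccos ((a + b - 2 * b) / (b - a)) = pi"
    by simp_all
qed

lemma has_integral_arccos_substitution:
  fixes h :: "real \<Rightarrow> real"
  assumes "a < b" "continuous_on {0..pi} h" "(h has_integral I) {0..pi}"
  shows "((\<lambda>y. h (arccos ((a + b - 2 * y) / (b - a))) / sqrt ((b - y) * (y - a)))
           has_integral I) {a..b}"
proof -
  define \<theta> where "\<theta> y = arccos ((a + b - 2 * y) / (b - a))" for y
  define F where "F \<phi> = integral {0..\<phi>} h" for \<phi>
  have F_derivative: "(F has_vector_derivative h \<phi>) (at \<phi> within {0..pi})" if "\<phi> \<in> {0..pi}" for \<phi>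
    unfolding F_def by (rule integral_has_vector_derivative[OF assms(2) that])
  then have "continuous_on {0..pi} F"
    using has_vector_derivative_continuous continuous_on_eq_continuous_within by blast
  then have "continuous_on {a..b} (F \<circ> \<theta>)"
    using arccos_affine_image(1,2)[OF assms(1)] unfolding \<theta>_def[abs_def]
    by (metis continuous_on_compose continuous_on_subset)
  moreover have "(F \<circ> \<theta> has_vector_derivative h (\<theta> y) / sqrt ((b - y) * (y - a))) (at y)"
    if y: "y \<in> {a<..<b}" for y
  proof -
    have "a < y" "y < b"
      using y by simp_all
    then have "\<theta> y \<in> {0<..<pi}"
      unfolding \<theta>_def by (rule arccos_affine_image(3)[OF assms(1)])
    then have "at (\<theta> y) within {0..pi} = at (\<theta> y)"
      by (intro at_within_interior) simp
    then have "(F has_real_derivative h (\<theta> y)) (at (\<theta> y))"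
      using F_derivative[of "\<theta> y"] \<open>\<theta> y \<in> {0<..<pi}\<close>
      unfolding has_real_derivative_iff_has_vector_derivative by simp
    from DERIV_chain[OF this arccos_affine_has_real_derivative[of a y b, folded \<theta>_def]]
    show ?thesis
      using \<open>a < y\<close> \<open>y < b\<close> by (simp add: has_real_derivative_iff_has_vector_derivative)
  qed
  ultimately have "((\<lambda>y. h (\<theta> y) / sqrt ((b - y) * (y - a))) has_integral F (\<theta> b) - F (\<theta> a)) {a..b}"
    using fundamental_theorem_of_calculus_interior[of a b "F \<circ> \<theta>"] assms(1) by simp
  then show ?thesis
    unfolding F_def \<theta>_def arccos_affine_image(4,5)[OF assms(1)] using assms(3)
    by (simp add: integral_unique)
qed

lemma Pi_product_kernel_arccos:
  assumes "0 < q" "q \<le> 1" "(1 - q)^2 < y" "y < (1 + q)^2"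
  shows "Pi_product_kernel q s t (arccos ((1 + q^2 - y) / (2 * q)))
    = ((1 + q)^2 - y) * (y - (1 - q)^2) / (4 * q^2 * y)
        * poly (Pi_poly (q^2) s) y * poly (Pi_poly (q^2) t) y"
proof -
  define u where "u = (1 + q^2 - y) / (2 * q)"
  have sq: "1 - u^2 = ((1 + q)^2 - y) * (y - (1 - q)^2) / (4 * q^2)"
    unfolding u_def using assms(1) by (simp add: field_simps) (simp add: power2_eq_square algebra_simps)
  moreover have "0 < ((1 + q)^2 - y) * (y - (1 - q)^2) / (4 * q^2)"
    using assms by simp
  ultimately have "u^2 < 1"
    by linarith
  then have u: "-1 \<le> u" "u \<le> 1"
    by (simp_all add: abs_square_less_1 abs_less_iff)
  have Y: "1 + q^2 - 2*q*cos (arccos u) = y"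
    unfolding cos_arccos[OF u] unfolding u_def using assms(1) by simp
  have "(sin (arccos u))^2 = 1 - u^2"
    unfolding sin_squared_eq cos_arccos[OF u] ..
  then have "Pi_product_kernel q s t (arccos u) * y
      = (1 - u^2) * poly (Pi_poly (q^2) s) y * poly (Pi_poly (q^2) t) y"
    using Pi_product_kernel_mult[OF less_imp_le[OF assms(1)] assms(2), of s t "arccos u"]
    unfolding Y by simp
  moreover have "0 < y"
    using assms(3) by (smt (verit) zero_le_power2)
  ultimately have "Pi_product_kernel q s t (arccos u)
      = (1 - u^2) * poly (Pi_poly (q^2) s) y * poly (Pi_poly (q^2) t) y / y"
    by (simp add: eq_divide_eq)
  then show ?thesis
    unfolding u_def[symmetric] sq using assms(1) \<open>0 < y\<close> by (simp add: field_simps)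
qed

lemma Pi_poly_orthogonal_mp_density:
  assumes "0 < \<kappa>" "\<kappa> \<le> 1" "s \<noteq> t"
  shows "((\<lambda>y. poly (Pi_poly \<kappa> s) y * poly (Pi_poly \<kappa> t) y * mp_density \<kappa> y) has_integral 0)
           {(1 - sqrt \<kappa>)^2..(1 + sqrt \<kappa>)^2}"
proof -
  define q where "q = sqrt \<kappa>"
  have q: "0 < q" "q \<le> 1" "\<kappa> = q^2"
    unfolding q_def using assms by auto
  define a b where "a = (1 - q)^2" and "b = (1 + q)^2"
  have "a < b"
    unfolding a_def b_def using q by (simp add: power2_eq_square algebra_simps)
  then have "((\<lambda>y. Pi_product_kernel q s t (arccos ((a + b - 2 * y) / (b - a)))
      / sqrt ((b - y) * (y - a))) has_integral 0) {a..b}"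
    using q assms(3)
    by (intro has_integral_arccos_substitution continuous_on_Pi_product_kernel
        Pi_product_kernel_has_integral_0) auto
  from has_integral_mult_right[OF this, of "2 / pi"]
  have kernel_integral: "((\<lambda>y. 2 / pi * (Pi_product_kernel q s t (arccos ((a + b - 2 * y) / (b - a)))
      / sqrt ((b - y) * (y - a)))) has_integral 0) {a..b}"
    by simp
  have "poly (Pi_poly \<kappa> s) y * poly (Pi_poly \<kappa> t) y * mp_density \<kappa> y
      = 2 / pi * (Pi_product_kernel q s t (arccos ((a + b - 2 * y) / (b - a)))
          / sqrt ((b - y) * (y - a)))"
    if "y \<in> {a..b} - {a, b}" for y
  proof -
    have y: "a < y" "y < b"
      using that by auto
    define r where "r = sqrt ((b - y) * (y - a))"
    have r: "0 < r" "(b - y) * (y - a) = r^2"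
      unfolding r_def using y by simp_all
    have "(a + b - 2 * y) / (b - a) = (1 + q^2 - y) / (2 * q)"
      unfolding a_def b_def using q by (simp add: field_simps) (simp add: power2_eq_square algebra_simps)
    then have kernel: "Pi_product_kernel q s t (arccos ((a + b - 2 * y) / (b - a)))
        = r^2 / (4 * q^2 * y) * (poly (Pi_poly \<kappa> s) y * poly (Pi_poly \<kappa> t) y)"
      using Pi_product_kernel_arccos[of q y s t] y q r(2) unfolding a_def b_def by simp
    have density: "mp_density \<kappa> y = r / (2 * pi * \<kappa> * y)"
      unfolding mp_density_def q_def[symmetric] a_def[symmetric] b_def[symmetric] r_def
      using y by simp
    have "0 < y"
      using y unfolding a_def by (smt (verit) zero_le_power2)
    then show ?thesis
      unfolding kernel density r_def[symmetric] using r(1) q by (simp add: field_simps power2_eq_square)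
  qed
  then show ?thesis
    unfolding q_def[symmetric] a_def[symmetric] b_def[symmetric]
    by (intro has_integral_spike_finite[of "{a, b}", OF _ _ kernel_integral]) auto
qed

lemma mp_density_affine_rescale:
  assumes "0 < \<tau>" "0 < \<kappa>" "0 < \<omega>" "0 < x"
    and "\<omega> * ((1 + sqrt \<tau>)^2 - c) = (1 + sqrt \<kappa>)^2"
    and "\<omega> * ((1 - sqrt \<tau>)^2 - c) = (1 - sqrt \<kappa>)^2"
  shows "x * mp_density \<tau> x / (x - c) = \<kappa> / \<tau> * mp_density \<kappa> (\<omega> * (x - c))"
proof -
  have max_scale: "max (\<omega> * z) 0 = \<omega> * max z 0" for z
    using max_mult_distrib_left[of \<omega> z 0] assms(3) by simp
  have upper: "(1 + sqrt \<kappa>)^2 - \<omega> * (x - c) = \<omega> * ((1 + sqrt \<tau>)^2 - x)"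
    and lower: "\<omega> * (x - c) - (1 - sqrt \<kappa>)^2 = \<omega> * (x - (1 - sqrt \<tau>)^2)"
    using assms(5,6) by (simp_all add: algebra_simps)
  have sqrt_scale: "sqrt (\<omega> * A * (\<omega> * B)) = \<omega> * sqrt (A * B)" for A B
  proof -
    have "\<omega> * A * (\<omega> * B) = \<omega>^2 * (A * B)"
      by (simp add: power2_eq_square ac_simps)
    then show ?thesis
      unfolding real_sqrt_mult using assms(3) by simp
  qed
  have "mp_density \<kappa> (\<omega> * (x - c))
      = \<omega> * sqrt (max ((1 + sqrt \<tau>)^2 - x) 0 * max (x - (1 - sqrt \<tau>)^2) 0)
        / (2 * pi * \<kappa> * (\<omega> * (x - c)))"
    unfolding mp_density_def upper lower max_scale sqrt_scale ..
  then show ?thesis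
    unfolding mp_density_def using assms by (cases "x = c") (simp_all add: field_simps)
qed

lemma R_poly_orthogonal:
  assumes "0 < \<tau>" "0 < \<kappa>" "\<kappa> \<le> 1" "0 < \<omega>" "0 < c"
    and "\<omega> * ((1 + sqrt \<tau>)^2 - c) = (1 + sqrt \<kappa>)^2"
    and "\<omega> * ((1 - sqrt \<tau>)^2 - c) = (1 - sqrt \<kappa>)^2"
    and "s \<noteq> t"
  shows "((\<lambda>x. poly (R_poly \<kappa> \<omega> c s) x * poly (R_poly \<kappa> \<omega> c t) x * (x * mp_density \<tau> x / (x - c)))
           has_integral 0) {(1 - sqrt \<tau>)^2..(1 + sqrt \<tau>)^2}"
proof -
  define g where "g y = poly (Pi_poly \<kappa> s) y * poly (Pi_poly \<kappa> t) y * mp_density \<kappa> y" for y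
  define K where "K = \<kappa> / (\<tau> * poly (Pi_poly \<kappa> s) (- \<omega> * c) * poly (Pi_poly \<kappa> t) (- \<omega> * c))"
  have "(g has_integral 0) (cbox (\<omega> * ((1 - sqrt \<tau>)^2 - c)) (\<omega> * ((1 + sqrt \<tau>)^2 - c)))"
    using Pi_poly_orthogonal_mp_density[OF assms(2,3,8)] unfolding g_def assms(6,7) by simp
  from has_integral_affinity'[OF this assms(4), of "- \<omega> * c"]
  have "((\<lambda>x. g (\<omega> * (x - c))) has_integral 0) {(1 - sqrt \<tau>)^2..(1 + sqrt \<tau>)^2}"
    using assms(4) by (simp add: field_simps)
  from has_integral_mult_right[OF this, of K]
  have Kg: "((\<lambda>x. K * g (\<omega> * (x - c))) has_integral 0) {(1 - sqrt \<tau>)^2..(1 + sqrt \<tau>)^2}"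
    by simp
  show ?thesis
  proof (rule has_integral_eq[OF _ Kg])
    fix x assume "x \<in> {(1 - sqrt \<tau>)^2..(1 + sqrt \<tau>)^2}"
    moreover have "0 \<le> (1 - sqrt \<tau>)^2 - c"
      using assms(4,7) zero_le_mult_iff[of \<omega>] by (metis zero_le_power2 not_less)
    ultimately have x: "0 < x"
      using assms(5) by simp
    show "K * g (\<omega> * (x - c))
        = poly (R_poly \<kappa> \<omega> c s) x * poly (R_poly \<kappa> \<omega> c t) x * (x * mp_density \<tau> x / (x - c))"
      unfolding poly_R_poly g_def K_def mp_density_affine_rescale[OF assms(1,2,4) x assms(6,7)]
      by (simp add: field_simps)
  qed
qed

lemma mp_support_affine_normalization:
  fixes c \<alpha> \<beta> :: real
  assumes "c \<le> \<alpha>" "\<alpha> < \<beta>"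
  defines "\<omega> \<equiv> 4 / (sqrt (\<beta> - c) + sqrt (\<alpha> - c))^2"
      and "\<kappa> \<equiv> ((sqrt (\<beta> - c) - sqrt (\<alpha> - c)) / (sqrt (\<beta> - c) + sqrt (\<alpha> - c)))^2"
  shows "0 < \<kappa>" "\<kappa> \<le> 1" "0 < \<omega>"
    and "\<omega> * (\<beta> - c) = (1 + sqrt \<kappa>)^2" "\<omega> * (\<alpha> - c) = (1 - sqrt \<kappa>)^2"
proof -
  define u v where "u = sqrt (\<beta> - c)" and "v = sqrt (\<alpha> - c)"
  have v: "0 \<le> v" "v < u" and u2: "u^2 = \<beta> - c" and v2: "v^2 = \<alpha> - c"
    unfolding u_def v_def using assms(1,2) by simp_all
  define q where "q = (u - v) / (u + v)"
  have q: "0 < q" "q \<le> 1"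
    unfolding q_def using v by simp_all
  have \<kappa>: "\<kappa> = q^2"
    unfolding \<kappa>_def q_def u_def v_def ..
  then have sqrt_\<kappa>: "sqrt \<kappa> = q"
    using q(1) by simp
  show "0 < \<kappa>" "\<kappa> \<le> 1"
    unfolding \<kappa> using q by (simp_all add: power_le_one)
  show "0 < \<omega>"
    unfolding \<omega>_def u_def[symmetric] v_def[symmetric] using v by simp
  have "1 + q = 2 * u / (u + v)" "1 - q = 2 * v / (u + v)"
    unfolding q_def using v by (simp_all add: field_simps)
  then show "\<omega> * (\<beta> - c) = (1 + sqrt \<kappa>)^2" "\<omega> * (\<alpha> - c) = (1 - sqrt \<kappa>)^2"
    unfolding sqrt_\<kappa> \<omega>_def u_def[symmetric] v_def[symmetric] u2[symmetric] v2[symmetric]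
    using v by (simp_all add: power_divide power_mult_distrib)
qed

lemma shift_below_mp_support:
  fixes \<gamma> \<xi> :: real
  assumes "0 < \<gamma>" "\<gamma> < 1" "\<gamma> < \<xi>" "\<xi> < 1"
  defines "lh \<equiv> (sqrt ((1 - \<gamma>) * \<xi>) - sqrt ((1 - \<xi>) * \<gamma>))^2"
      and "Lh \<equiv> (sqrt ((1 - \<gamma>) * \<xi>) + sqrt ((1 - \<xi>) * \<gamma>))^2"
  defines "\<tau> \<equiv> ((sqrt Lh - sqrt lh) / (sqrt Lh + sqrt lh))^2"
      and "c \<equiv> 4 / (sqrt (1 / Lh) + sqrt (1 / lh))^2"
  shows "0 < \<tau>" "0 < c" "c \<le> (1 - sqrt \<tau>)^2" "(1 - sqrt \<tau>)^2 < (1 + sqrt \<tau>)^2"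
proof -
  define a b where "a = sqrt ((1 - \<gamma>) * \<xi>)" and "b = sqrt ((1 - \<xi>) * \<gamma>)"
  have b: "0 < b" "b < a"
    unfolding a_def b_def using assms(1-4) by (simp_all add: algebra_simps)
  have "2 * (a * b) \<le> (1 - \<gamma>) * (1 - \<xi>) + \<xi> * \<gamma>"
  proof -
    define X Y where "X = (1 - \<gamma>) * (1 - \<xi>)" and "Y = \<xi> * \<gamma>"
    have "0 \<le> X" "0 \<le> Y"
      unfolding X_def Y_def using assms(1-4) by simp_all
    moreover have "a * b = sqrt X * sqrt Y"
      unfolding a_def b_def X_def Y_def by (simp add: real_sqrt_mult[symmetric] algebra_simps)
    moreover have "0 \<le> (sqrt X - sqrt Y)^2"
      by simp
    ultimately show ?thesis
      unfolding X_def[symmetric] Y_def[symmetric] by (simp add: power2_eq_square algebra_simps)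
  qed
  moreover have "a^2 = (1 - \<gamma>) * \<xi>" "b^2 = (1 - \<xi>) * \<gamma>"
    unfolding a_def b_def using assms(1-4) by simp_all
  ultimately have ab1: "(a + b)^2 \<le> 1"
    by (simp add: power2_eq_square algebra_simps)
  have sqrt_Lh: "sqrt Lh = a + b" and sqrt_lh: "sqrt lh = a - b"
    unfolding Lh_def lh_def a_def[symmetric] b_def[symmetric] using b by simp_all
  have sqrt_\<tau>: "sqrt \<tau> = b / a"
    unfolding \<tau>_def sqrt_Lh sqrt_lh using b by simp
  have sqrt_inverses: "sqrt (1 / Lh) = 1 / (a + b)" "sqrt (1 / lh) = 1 / (a - b)"
    using sqrt_Lh sqrt_lh by (simp_all add: real_sqrt_divide)
  have c: "c = (a + b)^2 * (a - b)^2 / a^2"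
    unfolding c_def sqrt_inverses using b by (simp add: field_simps power2_eq_square)
  show "0 < \<tau>"
    unfolding \<tau>_def sqrt_Lh sqrt_lh using b by simp
  show "0 < c"
    unfolding c using b by simp
  have \<alpha>: "(1 - sqrt \<tau>)^2 = (a - b)^2 / a^2"
    unfolding sqrt_\<tau> using b by (simp add: field_simps)
  show "c \<le> (1 - sqrt \<tau>)^2"
    unfolding c \<alpha> using b ab1 by (intro divide_right_mono mult_left_le_one_le) auto
  show "(1 - sqrt \<tau>)^2 < (1 + sqrt \<tau>)^2"
    unfolding sqrt_\<tau> using b by (simp add: power2_eq_square algebra_simps)
qed

theorem theorem4:
  fixes \<gamma> \<xi> :: real
  assumes "0 < \<gamma>" "\<gamma> < 1" "\<gamma> < \<xi>" "\<xi> < 1"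
  defines "lh \<equiv> (sqrt ((1 - \<gamma>) * \<xi>) - sqrt ((1 - \<xi>) * \<gamma>))^2"
      and "Lh \<equiv> (sqrt ((1 - \<gamma>) * \<xi>) + sqrt ((1 - \<xi>) * \<gamma>))^2"
  defines "\<tau> \<equiv> ((sqrt Lh - sqrt lh) / (sqrt Lh + sqrt lh))^2"
      and "c \<equiv> 4 / (sqrt (1 / Lh) + sqrt (1 / lh))^2"
  defines "\<alpha> \<equiv> (1 - sqrt \<tau>)^2"
      and "\<beta> \<equiv> (1 + sqrt \<tau>)^2"
  defines "\<omega> \<equiv> 4 / (sqrt (\<beta> - c) + sqrt (\<alpha> - c))^2"
      and "\<kappa> \<equiv> ((sqrt (\<beta> - c) - sqrt (\<alpha> - c)) / (sqrt (\<beta> - c) + sqrt (\<alpha> - c)))^2"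
  defines "R \<equiv> R_poly \<kappa> \<omega> c"
  shows "(\<forall>t. poly (R t) 0 = 1 \<and> degree (R t) = t) \<and>
         (\<forall>s t. s \<noteq> t \<longrightarrow>
           ((\<lambda>x. poly (R s) x * poly (R t) x * (x * mp_density \<tau> x / (x - c)))
              has_integral 0) {\<alpha>..\<beta>})"
proof -
  have \<tau>: "0 < \<tau>" and c: "0 < c" "c \<le> \<alpha>" "\<alpha> < \<beta>"
    using shift_below_mp_support[OF assms(1-4)]
    unfolding lh_def Lh_def \<tau>_def c_def \<alpha>_def \<beta>_def by simp_all
  note normalization = mp_support_affine_normalization[OF c(2,3), folded \<omega>_def \<kappa>_def]
  show ?thesis
  proof (intro conjI allI impI)
    fix t
    show "poly (R t) 0 = 1" "degree (R t) = t"
      unfolding R_def using R_poly_normalized normalization c(1) by simp_all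
  next
    fix s t :: nat
    assume "s \<noteq> t"
    then show "((\<lambda>x. poly (R s) x * poly (R t) x * (x * mp_density \<tau> x / (x - c))) has_integral 0)
        {\<alpha>..\<beta>}"
      unfolding R_def \<alpha>_def \<beta>_def
      using R_poly_orthogonal[OF \<tau> normalization(1-3) c(1)] normalization(4,5)
      unfolding \<alpha>_def \<beta>_def by blast
  qed
qed

end
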